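(* Let $G$ be a locally finite unweighted graph and $(x,y)\in E(G)$. Let $H$ be the subgraph of $G$ induced by $V_{(x,y)}=N_G(x)\cup N_G(y)\cup P_G(x,y)$. Then $\kappa_G(x,y)=\kappa_H(x,y)$. Moreover, if $H'$ denotes the graph obtained from $H$ by deleting all edges between $\Delta_G(x,y)$ and $P_G(x,y)$, then $\kappa_G(x,y)=\kappa_{H'}(x,y)$.
   Context: For a graph $K$ containing the edge $(x,y)$: $d_K$ is the shortest-path metric of $K$, $N_K(v)$ the neighbour set and $d_v$ the degree of $v$ in $K$, $m_v$ the uniform probability measure on $N_K(v)$, and $\kappa_K(x,y)=1-W_1^K(m_x,m_y)$, where $W_1^K(\mu,\nu)=\inf_{\pi}\sum_{u,w}\pi(u,w)d_K(u,w)$ is the transportation distance, the infimum being over couplings $\pi$ of $\mu$ and $\nu$. $\Delta_G(x,y)=N_G(x)\cap N_G(y)$, and $P_G(x,y)=\{v\in V(G): d_G(x,v)=d_G(y,v)=2\}$. *)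

theory Defs
  imports "HOL-Library.Extended_Nat" "HOL-Library.Extended_Real"
begin

definition simple_graph :: "'a set \<Rightarrow> ('a \<Rightarrow> 'a \<Rightarrow> bool) \<Rightarrow> bool" where
  "simple_graph V E \<longleftrightarrow> (\<forall>u v. E u v \<longrightarrow> u \<in> V \<and> v \<in> V) \<and>
     (\<forall>u v. E u v \<longrightarrow> E v u) \<and> (\<forall>u. \<not> E u u)"

definition nbrs :: "('a \<Rightarrow> 'a \<Rightarrow> bool) \<Rightarrow> 'a \<Rightarrow> 'a set" where
  "nbrs E v = {u. E v u}"

definition locally_finite :: "'a set \<Rightarrow> ('a \<Rightarrow> 'a \<Rightarrow> bool) \<Rightarrow> bool" where
  "locally_finite V E \<longleftrightarrow> (\<forall>v\<in>V. finite (nbrs E v))"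

text \<open>Shortest-path distance (infinite if there is no path).\<close>

definition walk_of_length :: "('a \<Rightarrow> 'a \<Rightarrow> bool) \<Rightarrow> nat \<Rightarrow> 'a \<Rightarrow> 'a \<Rightarrow> bool" where
  "walk_of_length E n u v \<longleftrightarrow>
     (\<exists>f. f 0 = u \<and> f n = v \<and> (\<forall>i<n. E (f i) (f (Suc i))))"

definition gdist :: "('a \<Rightarrow> 'a \<Rightarrow> bool) \<Rightarrow> 'a \<Rightarrow> 'a \<Rightarrow> enat" where
  "gdist E u v = (INF n \<in> {n. walk_of_length E n u v}. enat n)"

definition unif_nbr :: "('a \<Rightarrow> 'a \<Rightarrow> bool) \<Rightarrow> 'a \<Rightarrow> 'a \<Rightarrow> real" where
  "unif_nbr E v u = (if E v u then 1 / real (card (nbrs E v)) else 0)"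

text \<open>Couplings of finitely supported measures mu (support in A) and nu (support in B).
  Any coupling is supported in A x B, so this is the full set of couplings.\<close>

definition coupling :: "('a \<Rightarrow> real) \<Rightarrow> ('a \<Rightarrow> real) \<Rightarrow> 'a set \<Rightarrow> 'a set
    \<Rightarrow> ('a \<Rightarrow> 'a \<Rightarrow> real) \<Rightarrow> bool" where
  "coupling \<mu> \<nu> A B \<pi> \<longleftrightarrow> (\<forall>u w. 0 \<le> \<pi> u w) \<and>
     (\<forall>u w. \<pi> u w \<noteq> 0 \<longrightarrow> u \<in> A \<and> w \<in> B) \<and>
     (\<forall>u. (\<Sum>w\<in>B. \<pi> u w) = \<mu> u) \<and> (\<forall>w. (\<Sum>u\<in>A. \<pi> u w) = \<nu> w)"

definition transport_cost :: "('a \<Rightarrow> 'a \<Rightarrow> bool) \<Rightarrow> 'a set \<Rightarrow> 'a set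
    \<Rightarrow> ('a \<Rightarrow> 'a \<Rightarrow> real) \<Rightarrow> ereal" where
  "transport_cost E A B \<pi> = (\<Sum>u\<in>A. \<Sum>w\<in>B. ereal (\<pi> u w) * ereal_of_enat (gdist E u w))"

definition W1_nbr :: "('a \<Rightarrow> 'a \<Rightarrow> bool) \<Rightarrow> 'a \<Rightarrow> 'a \<Rightarrow> ereal" where
  "W1_nbr E x y = (INF \<pi> \<in> {\<pi>. coupling (unif_nbr E x) (unif_nbr E y) (nbrs E x) (nbrs E y) \<pi>}.
       transport_cost E (nbrs E x) (nbrs E y) \<pi>)"

definition ollivier_curv :: "('a \<Rightarrow> 'a \<Rightarrow> bool) \<Rightarrow> 'a \<Rightarrow> 'a \<Rightarrow> real" where
  "ollivier_curv E x y = 1 - real_of_ereal (W1_nbr E x y)"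

definition common_nbrs :: "('a \<Rightarrow> 'a \<Rightarrow> bool) \<Rightarrow> 'a \<Rightarrow> 'a \<Rightarrow> 'a set" where
  "common_nbrs E x y = nbrs E x \<inter> nbrs E y"

definition pent_set :: "'a set \<Rightarrow> ('a \<Rightarrow> 'a \<Rightarrow> bool) \<Rightarrow> 'a \<Rightarrow> 'a \<Rightarrow> 'a set" where
  "pent_set V E x y = {v \<in> V. gdist E x v = 2 \<and> gdist E y v = 2}"

definition induced :: "('a \<Rightarrow> 'a \<Rightarrow> bool) \<Rightarrow> 'a set \<Rightarrow> 'a \<Rightarrow> 'a \<Rightarrow> bool" where
  "induced E S u v \<longleftrightarrow> E u v \<and> u \<in> S \<and> v \<in> S"

end

theory Submission
  imports Defs
begin

text \<open>Every transport plan between m_x and m_y only sees distances d(u,w) with u ~ x and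
  w ~ y, and these are at most 3 because of the walk u, x, y, w. A subgraph that keeps the
  neighbourhoods of x and y, the edges u w and some path of length 2 between any such u and w
  therefore has the same W_1 distance. Every midpoint of a 2-path from N(x) to N(y) lies in
  N(x) \<union> N(y) \<union> P(x,y), and a path u, z, w through z \<in> P(x,y) with u or w in \<Delta>(x,y) can be
  rerouted through y or x; so both H and H' qualify.\<close>

lemma walk_of_length_0: "walk_of_length F 0 u v \<longleftrightarrow> u = v"
  unfolding walk_of_length_def by auto

lemma walk_of_length_1: "walk_of_length F 1 u v \<longleftrightarrow> F u v"
  unfolding walk_of_length_def
  by (auto intro: exI[of _ "\<lambda>i. if i = 0 then u else v"])

lemma walk_of_length_2: "walk_of_length F 2 u v \<longleftrightarrow> (\<exists>z. F u z \<and> F z v)"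
proof
  assume "walk_of_length F 2 u v"
  then obtain f where "f 0 = u" "f 2 = v" "\<forall>i<2. F (f i) (f (Suc i))"
    unfolding walk_of_length_def by blast
  then show "\<exists>z. F u z \<and> F z v"
    by (metis One_nat_def Suc_1 lessI less_2_cases_iff)
next
  assume "\<exists>z. F u z \<and> F z v"
  then obtain z where "F u z" "F z v" by blast
  then show "walk_of_length F 2 u v"
    unfolding walk_of_length_def
    by (intro exI[of _ "\<lambda>i. if i = 0 then u else if i = 1 then z else v"])
       (auto simp: less_2_cases_iff)
qed

lemma walk_of_length_3I: "F a b \<Longrightarrow> F b c \<Longrightarrow> F c d \<Longrightarrow> walk_of_length F 3 a d"
  unfolding walk_of_length_def
  by (intro exI[of _ "\<lambda>i. if i = 0 then a else if i = 1 then b else if i = 2 then c else d"])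
     (auto simp: numeral_3_eq_3 less_Suc_eq)

lemma walk_of_length_mono:
  "walk_of_length F n u v \<Longrightarrow> (\<And>a b. F a b \<Longrightarrow> E a b) \<Longrightarrow> walk_of_length E n u v"
  unfolding walk_of_length_def by blast

lemma gdist_le_walk: "walk_of_length F n u v \<Longrightarrow> gdist F u v \<le> enat n"
  unfolding gdist_def by (rule INF_lower) simp

lemma gdist_eqI:
  assumes "walk_of_length F n u v" and "\<And>m. m < n \<Longrightarrow> \<not> walk_of_length F m u v"
  shows "gdist F u v = enat n"
proof (rule antisym)
  show "gdist F u v \<le> enat n" using assms(1) by (rule gdist_le_walk)
  show "enat n \<le> gdist F u v"
    unfolding gdist_def using assms(2) by (intro INF_greatest) (auto simp: not_less[symmetric])
qed

lemma gdist_le_if_short_walks_transfer: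
  assumes walk: "walk_of_length F n u v"
    and transfer: "\<And>k. k \<le> n \<Longrightarrow> walk_of_length E k u v \<Longrightarrow> walk_of_length F k u v"
  shows "gdist F u v \<le> gdist E u v"
  unfolding gdist_def[of E]
proof (rule INF_greatest)
  fix m assume "m \<in> {m. walk_of_length E m u v}"
  show "gdist F u v \<le> enat m"
  proof (cases "m \<le> n")
    case True
    with \<open>m \<in> _\<close> have "walk_of_length F m u v" using transfer by simp
    then show ?thesis by (rule gdist_le_walk)
  next
    case False
    have "gdist F u v \<le> enat n" using walk by (rule gdist_le_walk)
    also have "\<dots> \<le> enat m" using False by simp
    finally show ?thesis .
  qed
qed

lemma gdist_cong_walks:
  assumes "walk_of_length F n u v"
    and "\<And>k. k \<le> n \<Longrightarrow> walk_of_length F k u v \<longleftrightarrow> walk_of_length E k u v"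
  shows "gdist F u v = gdist E u v"
proof (rule antisym)
  show "gdist F u v \<le> gdist E u v"
    using assms by (intro gdist_le_if_short_walks_transfer[where n = n]) blast+
  show "gdist E u v \<le> gdist F u v"
    using assms by (intro gdist_le_if_short_walks_transfer[where n = n]) blast+
qed

lemma gdist_subgraph_eq:
  assumes walk: "walk_of_length F 3 u w" and sub: "\<And>a b. F a b \<Longrightarrow> E a b"
    and edge: "E u w \<Longrightarrow> F u w"
    and path: "\<And>z. E u z \<Longrightarrow> E z w \<Longrightarrow> \<exists>z'. F u z' \<and> F z' w"
  shows "gdist F u w = gdist E u w"
proof (rule gdist_cong_walks[OF walk])
  fix k :: nat assume "k \<le> 3"
  then consider "k = 0" | "k = 1" | "k = 2" | "k = 3" by linarith
  then show "walk_of_length F k u w \<longleftrightarrow> walk_of_length E k u w"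
  proof cases
    case 1
    then show ?thesis by (simp add: walk_of_length_0)
  next
    case 2
    then show ?thesis using sub edge by (auto simp only: walk_of_length_1)
  next
    case 3
    then show ?thesis using sub path by (auto simp only: walk_of_length_2)
  next
    case 4
    have "walk_of_length E 3 u w" using walk sub by (rule walk_of_length_mono)
    then show ?thesis using walk 4 by simp
  qed
qed

lemma W1_nbr_cong:
  assumes Fx: "F x = E x" and Fy: "F y = E y"
    and dist: "\<And>u w. E x u \<Longrightarrow> E y w \<Longrightarrow> gdist F u w = gdist E u w"
  shows "W1_nbr F x y = W1_nbr E x y"
proof -
  have "nbrs F x = nbrs E x" "nbrs F y = nbrs E y" "unif_nbr F x = unif_nbr E x"
    "unif_nbr F y = unif_nbr E y"
    unfolding nbrs_def unif_nbr_def Fx Fy by simp_all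
  then show ?thesis
    unfolding W1_nbr_def transport_cost_def
    by (simp only:) (intro INF_cong[OF refl] sum.cong[OF refl], simp add: dist nbrs_def)
qed

lemma W1_nbr_eq_of_subgraph:
  assumes sub: "\<And>a b. F a b \<Longrightarrow> E a b" and sym: "\<And>a b. F a b \<Longrightarrow> F b a"
    and Fx: "F x = E x" and Fy: "F y = E y" and "E x y"
    and edge: "\<And>u w. E x u \<Longrightarrow> E y w \<Longrightarrow> E u w \<Longrightarrow> F u w"
    and path: "\<And>u z w. E x u \<Longrightarrow> E y w \<Longrightarrow> E u z \<Longrightarrow> E z w \<Longrightarrow> \<exists>z'. F u z' \<and> F z' w"
  shows "W1_nbr F x y = W1_nbr E x y"
proof (rule W1_nbr_cong[OF Fx Fy])
  fix u w assume u: "E x u" and w: "E y w"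
  have "F x u" "F x y" "F y w" using u w \<open>E x y\<close> Fx Fy by simp_all
  then have "walk_of_length F 3 u w" using sym walk_of_length_3I by metis
  then show "gdist F u w = gdist E u w"
    using sub edge[OF u w] path[OF u w] by (rule gdist_subgraph_eq)
qed

definition local_vertices :: "'a set \<Rightarrow> ('a \<Rightarrow> 'a \<Rightarrow> bool) \<Rightarrow> 'a \<Rightarrow> 'a \<Rightarrow> 'a set" where
  "local_vertices V E x y = nbrs E x \<union> nbrs E y \<union> pent_set V E x y"

definition pruned_local_graph :: "'a set \<Rightarrow> ('a \<Rightarrow> 'a \<Rightarrow> bool) \<Rightarrow> 'a \<Rightarrow> 'a \<Rightarrow> 'a \<Rightarrow> 'a \<Rightarrow> bool"
  where
  "pruned_local_graph V E x y u v \<longleftrightarrow> induced E (local_vertices V E x y) u v \<and>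
     \<not> ((u \<in> common_nbrs E x y \<and> v \<in> pent_set V E x y) \<or>
        (u \<in> pent_set V E x y \<and> v \<in> common_nbrs E x y))"

lemma nbr_not_in_pent_set:
  assumes "E x a \<or> E y a"
  shows "a \<notin> pent_set V E x y"
proof -
  have "gdist E x a \<le> enat 1 \<or> gdist E y a \<le> enat 1"
    using assms gdist_le_walk[of E 1] by (auto simp only: walk_of_length_1)
  then show ?thesis by (auto simp: pent_set_def enat_numeral)
qed

lemma two_path_midpoint_in_local_vertices:
  assumes G: "simple_graph V E" and "E x y" "E x u" "E y w" "E u z" "E z w"
  shows "z \<in> local_vertices V E x y"
proof (cases "E x z \<or> E y z")
  case True
  then show ?thesis by (auto simp: local_vertices_def nbrs_def)
next
  case False
  have sym: "E a b \<Longrightarrow> E b a" for a b using G by (simp add: simple_graph_def)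
  have "z \<noteq> x" "z \<noteq> y" using False \<open>E x y\<close> sym by auto
  have "gdist E c z = enat 2" if "E c v" "E v z" "\<not> E c z" "c \<noteq> z" for c v
  proof (rule gdist_eqI)
    show "walk_of_length E 2 c z" using that walk_of_length_2 by metis
    show "\<not> walk_of_length E m c z" if "m < 2" for m
      using \<open>m < 2\<close> \<open>\<not> E c z\<close> \<open>c \<noteq> z\<close> less_2_cases_iff[of m]
        walk_of_length_0[of E c z] walk_of_length_1[of E c z]
      by auto
  qed
  then have "gdist E x z = enat 2" "gdist E y z = enat 2"
    using assms False \<open>z \<noteq> x\<close> \<open>z \<noteq> y\<close> sym by metis+
  moreover have "z \<in> V" using G \<open>E u z\<close> by (simp add: simple_graph_def)
  ultimately show ?thesis by (simp add: local_vertices_def pent_set_def enat_numeral)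
qed

lemma pruned_local_graph_off_pent_set:
  assumes "u \<in> local_vertices V E x y" "v \<in> local_vertices V E x y"
    and "u \<notin> pent_set V E x y" "v \<notin> pent_set V E x y"
  shows "pruned_local_graph V E x y u v \<longleftrightarrow> E u v"
  using assms by (simp add: pruned_local_graph_def induced_def)

lemma pruned_local_graph_sym:
  "simple_graph V E \<Longrightarrow> pruned_local_graph V E x y u v \<Longrightarrow> pruned_local_graph V E x y v u"
  unfolding pruned_local_graph_def induced_def simple_graph_def by blast

lemma pruned_local_graph_le: "pruned_local_graph V E x y u v \<Longrightarrow> E u v"
  by (simp add: pruned_local_graph_def induced_def)

lemma pruned_local_graph_at_edge_ends:
  assumes G: "simple_graph V E" and "E x y" and "c \<in> {x, y}"
  shows "pruned_local_graph V E x y c = E c"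
proof
  fix a
  have "E y x" using G \<open>E x y\<close> by (simp add: simple_graph_def)
  then have "c \<in> local_vertices V E x y" "c \<notin> pent_set V E x y"
    using \<open>E x y\<close> \<open>c \<in> {x, y}\<close> nbr_not_in_pent_set[of E x c y V]
    by (auto simp: local_vertices_def nbrs_def)
  moreover have "E c a \<Longrightarrow> a \<in> local_vertices V E x y \<and> a \<notin> pent_set V E x y"
    using \<open>c \<in> {x, y}\<close> nbr_not_in_pent_set[of E x a y V] by (auto simp: local_vertices_def nbrs_def)
  ultimately show "pruned_local_graph V E x y c a = E c a"
    using pruned_local_graph_off_pent_set[of c V E x y a] pruned_local_graph_le[of V E x y c a]
    by blast
qed

lemma pruned_local_graph_edge:
  assumes "E x u" "E y w" "E u w"
  shows "pruned_local_graph V E x y u w"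
  using assms nbr_not_in_pent_set[of E x u y V] nbr_not_in_pent_set[of E x w y V]
  by (simp add: pruned_local_graph_off_pent_set local_vertices_def nbrs_def)

lemma pruned_local_graph_two_path:
  assumes G: "simple_graph V E" and xy: "E x y" and u: "E x u" and w: "E y w"
    and uz: "E u z" and zw: "E z w"
  shows "\<exists>z'. pruned_local_graph V E x y u z' \<and> pruned_local_graph V E x y z' w"
proof -
  let ?H' = "pruned_local_graph V E x y" and ?P = "pent_set V E x y"
  have sym: "E a b \<Longrightarrow> E b a" for a b using G by (simp add: simple_graph_def)
  have H'x: "?H' x = E x" and H'y: "?H' y = E y"
    using pruned_local_graph_at_edge_ends[OF G xy] by auto
  have uP: "u \<notin> ?P" and wP: "w \<notin> ?P"
    using u w nbr_not_in_pent_set[of E x u y V] nbr_not_in_pent_set[of E x w y V] by auto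
  have zV: "z \<in> local_vertices V E x y"
    using two_path_midpoint_in_local_vertices[OF assms] .
  have uV: "u \<in> local_vertices V E x y" and wV: "w \<in> local_vertices V E x y"
    using u w by (auto simp: local_vertices_def nbrs_def)
  consider "z \<notin> ?P" | "u \<in> common_nbrs E x y" | "w \<in> common_nbrs E x y"
    | "z \<in> ?P" "u \<notin> common_nbrs E x y" "w \<notin> common_nbrs E x y" by blast
  then show ?thesis
  proof cases
    case 1
    then have "?H' u z" "?H' z w"
      using uz zw uV wV zV uP wP by (simp_all add: pruned_local_graph_off_pent_set)
    then show ?thesis by blast
  next
    case 2
    then have "?H' y u" "?H' y w" using w H'y by (auto simp: common_nbrs_def nbrs_def)
    then show ?thesis using pruned_local_graph_sym[OF G] by blast
  next
    case 3
    then have "?H' x u" "?H' x w" using u H'x by (auto simp: common_nbrs_def nbrs_def)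
    then show ?thesis using pruned_local_graph_sym[OF G] by blast
  next
    case 4
    then have "?H' u z" "?H' z w"
      using uz zw uV wV zV uP wP by (auto simp: pruned_local_graph_def induced_def)
    then show ?thesis by blast
  qed
qed

theorem lemma2p3:
  fixes V :: "'a set" and E :: "'a \<Rightarrow> 'a \<Rightarrow> bool" and x y :: 'a
  assumes "simple_graph V E" and "locally_finite V E" and "E x y"
  defines "Vxy \<equiv> nbrs E x \<union> nbrs E y \<union> pent_set V E x y"
  defines "EH \<equiv> induced E Vxy"
  defines "EH' \<equiv> (\<lambda>u v. EH u v \<and>
              \<not> ((u \<in> common_nbrs E x y \<and> v \<in> pent_set V E x y) \<or>
                 (u \<in> pent_set V E x y \<and> v \<in> common_nbrs E x y)))"
  shows "ollivier_curv E x y = ollivier_curv EH x y \<and> ollivier_curv E x y = ollivier_curv EH' x y"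
proof -
  note G = assms(1) and xy = assms(3)
  have EH': "EH' = pruned_local_graph V E x y"
    by (intro ext) (simp add: EH'_def EH_def Vxy_def pruned_local_graph_def local_vertices_def)
  have H'_le_H: "EH' a b \<Longrightarrow> EH a b" and H_le_E: "EH a b \<Longrightarrow> E a b" for a b
    by (simp_all add: EH'_def EH_def induced_def)
  have H'_ends: "EH' c = E c" if "c \<in> {x, y}" for c
    using pruned_local_graph_at_edge_ends[OF G xy that] EH' by simp
  have "W1_nbr EH' x y = W1_nbr E x y"
    unfolding EH'
  proof (rule W1_nbr_eq_of_subgraph[where E = E, OF _ _ _ _ xy])
    show "E a b" if "pruned_local_graph V E x y a b" for a b
      using pruned_local_graph_le[OF that] .
    show "pruned_local_graph V E x y b a" if "pruned_local_graph V E x y a b" for a b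
      using pruned_local_graph_sym[OF G that] .
    show "pruned_local_graph V E x y x = E x" "pruned_local_graph V E x y y = E y"
      using pruned_local_graph_at_edge_ends[OF G xy] by simp_all
    show "pruned_local_graph V E x y u w" if "E x u" "E y w" "E u w" for u w
      using pruned_local_graph_edge[where E = E and V = V, OF that] .
    show "\<exists>z'. pruned_local_graph V E x y u z' \<and> pruned_local_graph V E x y z' w"
      if "E x u" "E y w" "E u z" "E z w" for u z w
      using pruned_local_graph_two_path[OF G xy that] .
  qed
  moreover have "W1_nbr EH x y = W1_nbr E x y"
  proof (rule W1_nbr_eq_of_subgraph[where E = E, OF _ _ _ _ xy])
    show "E a b" if "EH a b" for a b
      using H_le_E[OF that] .
    show "EH b a" if "EH a b" for a b
      using G that by (auto simp: EH_def induced_def simple_graph_def)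
    have "EH c = E c" if "c \<in> {x, y}" for c
      using H'_ends[OF that] H'_le_H H_le_E by (auto simp: fun_eq_iff)
    then show "EH x = E x" "EH y = E y" by simp_all
    show "EH u w" if "E x u" "E y w" "E u w" for u w
      using pruned_local_graph_edge[where E = E and V = V, OF that] EH' H'_le_H by simp
    show "\<exists>z'. EH u z' \<and> EH z' w" if "E x u" "E y w" "E u z" "E z w" for u z w
      using pruned_local_graph_two_path[OF G xy that] EH' H'_le_H by blast
  qed
  ultimately show ?thesis unfolding ollivier_curv_def by simp
qed

end
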